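(* Let $n,t,t'$ be positive integers with $n\ge 2t(t+1)$ and $t'\log n\ge 4t\log t$, and let $m\ge 0$ be an integer. Then there exist a map $\mathcal{E}_b:\mathcal{S}_n\to\mathcal{S}_{n+t'+1}$ and a decoding map $\mathcal{D}$ such that for every $\sigma\in\mathcal{S}_n$ and every sequence $\pi_e$ obtained from $\pi=\mathcal{E}_b(\sigma)$ by a burst of stuck-at errors of length at most $t$ with threshold $m$ (as defined in the context), we have $\mathcal{D}(\pi_e)=\sigma$.
   Context: $\mathcal{S}_N$ denotes the set of permutations $\pi=(\pi(1),\ldots,\pi(N))$ of $[N]=\{1,\ldots,N\}$. Burst of stuck-at errors of length at most $t$ with threshold $m$: a sequence $\pi_e\in[N]^N$ is obtained from $\pi\in\mathcal{S}_N$ by such an error if there exist $j\in[N]$, $t_1\in[t]$ and positions $i_1,\ldots,i_{t_1}$ with $\pi(i_\ell)=j+\ell-1$ and $\pi(i_\ell)>m$ for all $\ell\in[t_1]$, such that $\pi_e(i_\ell)=j$ for all $\ell\in[t_1]$ and $\pi_e(i)=\pi(i)$ for $i\notin\{i_1,\ldots,i_{t_1}\}$. Logarithms are to a common base. *)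

theory Defs
  imports Complex_Main
begin

text \<open>Permutations of [N] = {1..N}, written as lists of length N
  (list index k corresponds to position k+1).\<close>
definition perms :: "nat \<Rightarrow> nat list set" where
  "perms N = {p. length p = N \<and> set p = {1..N}}"

definition stuck_burst :: "nat \<Rightarrow> nat \<Rightarrow> nat list \<Rightarrow> nat list \<Rightarrow> bool" where
  "stuck_burst t m p pe \<longleftrightarrow>
     length pe = length p \<and>
     (\<exists>j t1 (idx :: nat \<Rightarrow> nat).
        1 \<le> j \<and> j \<le> length p \<and> 1 \<le> t1 \<and> t1 \<le> t \<and>
        (\<forall>l\<in>{1..t1}. idx l < length p \<and> p ! (idx l) = j + l - 1 \<and> p ! (idx l) > m) \<and>
        (\<forall>l\<in>{1..t1}. pe ! (idx l) = j) \<and>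
        (\<forall>i<length p. i \<notin> idx ` {1..t1} \<longrightarrow> pe ! i = p ! i))"

end

theory Submission
  imports Defs "HOL-Combinatorics.Multiset_Permutations" "HOL-Library.FuncSet"
begin

text \<open>Call two permutations confusable if one burst turns both into the same word.
  On a permutation p a burst replaces the values of a window {j..<j+k}, k \<le> t, by j;
  comparing two such descriptions of the same received word shows that every q confusable
  with p arises from p by relabelling the values inside a single window {j..<j+t}. Hence p
  has at most N t^t confusable partners among the N! permutations of [N], N = n + t' + 1,
  and a maximal independent set of the confusability graph is a code of size at least
  N! / (N t^t + 1). This is at least n!, since t^t < n^t' by the logarithmic hypothesis
  and n! n^t' N \<le> N!. Encode S_n injectively into the code and decode by choosing the
  unique codeword that can produce the received word.\<close>

lemma perms_eq_permutations_of_set: "perms N = permutations_of_set {1..N}"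
  unfolding perms_def permutations_of_set_def
  by (metis (lifting) card_atLeastAtMost card_distinct diff_Suc_1 distinct_card)

lemma card_perms: "card (perms N) = fact N"
  by (simp add: perms_eq_permutations_of_set)

lemma finite_perms: "finite (perms N)"
  by (simp add: perms_eq_permutations_of_set)

lemma distinct_perms: "p \<in> perms N \<Longrightarrow> distinct p"
  by (simp add: perms_eq_permutations_of_set permutations_of_set_def)

lemma length_perms: "p \<in> perms N \<Longrightarrow> length p = N"
  by (simp add: perms_def)

lemma exists_independent_set_card_ge:
  fixes R :: "'a \<Rightarrow> 'a \<Rightarrow> bool"
  assumes fin: "finite V" and sym: "\<And>x y. R x y \<Longrightarrow> R y x"
    and deg: "\<And>x. x \<in> V \<Longrightarrow> card {y\<in>V. R x y} \<le> d"
  shows "\<exists>I\<subseteq>V. (\<forall>x\<in>I. \<forall>y\<in>I. x \<noteq> y \<longrightarrow> \<not> R x y) \<and> card V \<le> card I * (d + 1)"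
proof -
  define indep where "indep I \<longleftrightarrow> I \<subseteq> V \<and> (\<forall>x\<in>I. \<forall>y\<in>I. x \<noteq> y \<longrightarrow> \<not> R x y)" for I
  have "indep {}"
    by (simp add: indep_def)
  moreover have "\<forall>J. indep J \<longrightarrow> card J < Suc (card V)"
    using fin card_mono by (fastforce simp: indep_def)
  ultimately obtain I where I: "indep I" and max: "\<And>J. indep J \<Longrightarrow> card J \<le> card I"
    using Lattices_Big.ex_has_greatest_nat[of indep "{}" card "Suc (card V)"] by blast
  have finI: "finite I"
    using I fin finite_subset by (auto simp: indep_def)
  \<comment> \<open>By maximality every vertex outside I has a neighbour in I.\<close>
  have cover: "V \<subseteq> I \<union> (\<Union>y\<in>I. {x\<in>V. R y x})"
  proof
    fix x assume x: "x \<in> V"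
    show "x \<in> I \<union> (\<Union>y\<in>I. {x\<in>V. R y x})"
    proof (rule ccontr)
      assume "x \<notin> I \<union> (\<Union>y\<in>I. {x\<in>V. R y x})"
      then have "x \<notin> I" and "indep (insert x I)"
        using I x sym by (auto simp: indep_def)
      then show False
        using max finI by fastforce
    qed
  qed
  have "card V \<le> card I + (\<Sum>y\<in>I. card {x\<in>V. R y x})"
  proof -
    have "card V \<le> card (I \<union> (\<Union>y\<in>I. {x\<in>V. R y x}))"
      using fin finI by (intro card_mono[OF _ cover]) auto
    also have "\<dots> \<le> card I + card (\<Union>y\<in>I. {x\<in>V. R y x})"
      by (rule card_Un_le)
    also have "\<dots> \<le> card I + (\<Sum>y\<in>I. card {x\<in>V. R y x})"
      using card_UN_le[OF finI] by simp
    finally show ?thesis .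
  qed
  also have "\<dots> \<le> card I + card I * d"
    using I deg sum_bounded_above[of I "\<lambda>y. card {x\<in>V. R y x}" d] by (auto simp: indep_def)
  finally show ?thesis
    using I by (auto simp: indep_def)
qed

definition stuck_at :: "nat \<Rightarrow> nat \<Rightarrow> nat \<Rightarrow> nat" where
  "stuck_at j k v = (if v \<in> {j..<j + k} then j else v)"

lemma stuck_at_in: "v \<in> {j..<j + k} \<Longrightarrow> stuck_at j k v = j"
  by (simp add: stuck_at_def)

lemma stuck_at_notin: "v \<notin> {j..<j + k} \<Longrightarrow> stuck_at j k v = v"
  by (auto simp: stuck_at_def)

lemma stuck_burst_distinct_eq_map:
  assumes dist: "distinct p" and burst: "stuck_burst t m p pe"
  shows "\<exists>j k. j \<in> set p \<and> k \<le> t \<and> pe = map (stuck_at j k) p"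
proof -
  obtain j k idx where k: "1 \<le> k" "k \<le> t"
    and idx: "\<forall>l\<in>{1..k}. idx l < length p \<and> p ! idx l = j + l - 1"
    and stuck: "\<forall>l\<in>{1..k}. pe ! idx l = j"
    and rest: "\<forall>i<length p. i \<notin> idx ` {1..k} \<longrightarrow> pe ! i = p ! i"
    and len: "length pe = length p"
    using burst unfolding stuck_burst_def by blast
  have "idx 1 < length p" and "p ! idx 1 = j"
    using idx k(1) by auto
  then have "j \<in> set p"
    by (metis nth_mem)
  \<comment> \<open>Since p is injective, the burst hits exactly the positions carrying values of the window.\<close>
  have hit: "i \<in> idx ` {1..k} \<longleftrightarrow> p ! i \<in> {j..<j + k}" if i: "i < length p" for i
  proof
    assume "i \<in> idx ` {1..k}"
    then show "p ! i \<in> {j..<j + k}"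
      using idx by auto
  next
    assume v: "p ! i \<in> {j..<j + k}"
    define l where "l = p ! i - j + 1"
    have l: "l \<in> {1..k}" and "p ! idx l = p ! i" "idx l < length p"
      using v idx by (auto simp: l_def)
    then have "idx l = i"
      using dist i nth_eq_iff_index_eq by metis
    then show "i \<in> idx ` {1..k}"
      using l by blast
  qed
  have "pe ! i = stuck_at j k (p ! i)" if "i < length p" for i
  proof (cases "i \<in> idx ` {1..k}")
    case True
    then have "p ! i \<in> {j..<j + k}" and "pe ! i = j"
      using hit[OF that] stuck by auto
    then show ?thesis
      by (simp add: stuck_at_in)
  next
    case False
    then have "p ! i \<notin> {j..<j + k}" and "pe ! i = p ! i"
      using hit[OF that] rest that by blast+
    then show ?thesis
      by (simp add: stuck_at_notin)
  qed
  then have "pe = map (stuck_at j k) p"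
    using len by (simp add: nth_equalityI)
  then show ?thesis
    using \<open>j \<in> set p\<close> k(2) by blast
qed

lemma stuck_at_collision_in_window:
  assumes dist: "distinct p" and len: "length q = length p"
    and "j' \<in> set q" and "k \<le> t" and "k' \<le> t"
    and same: "map (stuck_at j k) p = map (stuck_at j' k') q"
    and i: "i < length p"
  shows "q ! i = p ! i \<or> p ! i \<in> {j..<j + t} \<and> q ! i \<in> {j..<j + t}"
proof -
  have eq: "stuck_at j k (p ! i) = stuck_at j' k' (q ! i)" if "i < length p" for i
    using same that len by (metis nth_map)
  obtain i0 where i0: "i0 < length p" "q ! i0 = j'"
    using \<open>j' \<in> set q\<close> len by (metis in_set_conv_nth)
  show ?thesis
  proof (cases "p ! i \<in> {j..<j + k}")
    case True
    then show ?thesis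
      using eq[OF i] \<open>k \<le> t\<close> \<open>k' \<le> t\<close> by (auto simp: stuck_at_def split: if_splits)
  next
    case False
    then have "stuck_at j k (p ! i) = p ! i"
      by (rule stuck_at_notin)
    then have pi: "p ! i = stuck_at j' k' (q ! i)"
      using eq[OF i] by simp
    show ?thesis
    proof (cases "q ! i \<in> {j'..<j' + k'}")
      case False
      then show ?thesis
        using pi by (simp add: stuck_at_notin)
    next
      case True
      \<comment> \<open>Then p i = j', and j' also sits in q at i0, where it must be unchanged in p.\<close>
      then have "p ! i = j'" and "j' \<in> {j'..<j' + k'}"
        using pi by (auto simp: stuck_at_in)
      then have stuck_i0: "stuck_at j k (p ! i0) = j'"
        using eq[OF i0(1)] i0(2) by (simp add: stuck_at_in)
      have "p ! i0 \<notin> {j..<j + k}"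
      proof
        assume "p ! i0 \<in> {j..<j + k}"
        then have "j = j'" and "j \<in> {j..<j + k}"
          using stuck_i0 by (auto simp: stuck_at_in)
        then show False
          using \<open>p ! i = j'\<close> \<open>p ! i \<notin> {j..<j + k}\<close> by simp
      qed
      then have "p ! i0 = p ! i"
        using stuck_i0 \<open>p ! i = j'\<close> by (simp add: stuck_at_notin)
      then have "i0 = i"
        using dist i i0(1) nth_eq_iff_index_eq by metis
      then show ?thesis
        using i0(2) \<open>p ! i = j'\<close> by simp
    qed
  qed
qed

definition confusable :: "nat \<Rightarrow> nat \<Rightarrow> nat list \<Rightarrow> nat list \<Rightarrow> bool" where
  "confusable t m p q \<longleftrightarrow> (\<exists>pe. stuck_burst t m p pe \<and> stuck_burst t m q pe)"

lemma confusable_sym: "confusable t m p q \<Longrightarrow> confusable t m q p"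
  unfolding confusable_def by blast

definition relabel_window :: "nat \<Rightarrow> nat \<Rightarrow> (nat \<Rightarrow> nat) \<Rightarrow> nat list \<Rightarrow> nat list" where
  "relabel_window j t f p = map (\<lambda>v. if v \<in> {j..<j + t} then f v else v) p"

lemma confusable_imp_relabel_window:
  assumes p: "p \<in> perms N" and q: "q \<in> perms N" and conf: "confusable t m p q"
  shows "\<exists>j\<in>{1..N}. \<exists>f\<in>{j..<j + t} \<rightarrow>\<^sub>E {j..<j + t}. q = relabel_window j t f p"
proof -
  have dist: "distinct p" "distinct q" and len: "length p = N" "length q = N"
    using p q by (auto simp: distinct_perms length_perms)
  obtain pe where "stuck_burst t m p pe" "stuck_burst t m q pe"
    using conf unfolding confusable_def by blast
  then obtain j k j' k' where "j \<in> set p" "k \<le> t" "pe = map (stuck_at j k) p"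
    and "j' \<in> set q" "k' \<le> t" "pe = map (stuck_at j' k') q"
    using dist stuck_burst_distinct_eq_map by metis
  then have window: "q ! i = p ! i \<or> p ! i \<in> {j..<j + t} \<and> q ! i \<in> {j..<j + t}"
    if "i < N" for i
    using stuck_at_collision_in_window[OF dist(1)] len that by simp
  define W where "W = {j..<j + t}"
  define g where "g v = (case map_of (zip p q) v of None \<Rightarrow> v | Some w \<Rightarrow> w)" for v
  have g_nth: "g (p ! i) = q ! i" if "i < N" for i
    using map_of_zip_nth[of p q i] dist len that by (simp add: g_def)
  have "restrict g W \<in> W \<rightarrow>\<^sub>E W"
  proof
    fix v assume v: "v \<in> W"
    show "restrict g W v \<in> W"
    proof (cases "v \<in> set p")
      case True
      then obtain i where i: "i < N" "v = p ! i"
        using len by (metis in_set_conv_nth)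
      then have "q ! i \<in> W"
        using v window[OF i(1)] by (auto simp: W_def)
      then show ?thesis
        using v i g_nth by simp
    next
      case False
      then have "map_of (zip p q) v = None"
        using len by simp
      then show ?thesis
        using v by (simp add: g_def)
    qed
  qed simp
  moreover have "q = relabel_window j t (restrict g W) p"
    using len window g_nth by (intro nth_equalityI) (auto simp: relabel_window_def W_def)
  moreover have "j \<in> {1..N}"
    using \<open>j \<in> set p\<close> p by (simp add: perms_def)
  ultimately show ?thesis
    unfolding W_def by blast
qed

lemma card_confusable_le:
  assumes "p \<in> perms N"
  shows "card {q\<in>perms N. confusable t m p q} \<le> N * t ^ t"
proof -
  let ?nbrs = "\<lambda>j. (\<lambda>f. relabel_window j t f p) ` ({j..<j + t} \<rightarrow>\<^sub>E {j..<j + t})"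
  have "{q\<in>perms N. confusable t m p q} \<subseteq> (\<Union>j\<in>{1..N}. ?nbrs j)"
    using confusable_imp_relabel_window[OF assms] by blast
  then have "card {q\<in>perms N. confusable t m p q} \<le> card (\<Union>j\<in>{1..N}. ?nbrs j)"
    by (rule card_mono[rotated]) (intro finite_UN_I finite_imageI finite_PiE; simp)
  also have "\<dots> \<le> (\<Sum>j\<in>{1..N}. card (?nbrs j))"
    by (rule card_UN_le) simp
  also have "\<dots> \<le> (\<Sum>j\<in>{1..N}. t ^ t)"
  proof (rule sum_mono)
    fix j
    have "card (?nbrs j) \<le> card ({j..<j + t} \<rightarrow>\<^sub>E {j..<j + t})"
      by (rule card_image_le) (simp add: finite_PiE)
    then show "card (?nbrs j) \<le> t ^ t"
      by (simp add: card_funcsetE)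
  qed
  finally show ?thesis
    by simp
qed

lemma fact_mult_power_le_fact_add: "fact n * n ^ k \<le> (fact (n + k) :: nat)"
proof (induction k)
  case 0
  then show ?case
    by simp
next
  case (Suc k)
  have "fact n * n ^ Suc k = fact n * n ^ k * n"
    by simp
  also have "\<dots> \<le> fact (n + k) * Suc (n + k)"
    using Suc.IH by (intro mult_le_mono) auto
  also have "\<dots> = fact (n + Suc k)"
    by (simp add: fact_Suc)
  finally show ?case .
qed

lemma power_self_less_power:
  fixes n t t' :: nat
  assumes "2 \<le> n" and "0 < t'"
    and "4 * real t * ln (real t) \<le> real t' * ln (real n)"
  shows "t ^ t < n ^ t'"
proof (cases "t \<le> 1")
  case True
  then have "t ^ t = 1"
    by (cases t) auto
  moreover have "1 < n ^ t'"
    using assms(1,2) by (intro one_less_power) auto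
  ultimately show ?thesis
    by linarith
next
  case False
  have "ln (real t ^ (4 * t)) \<le> ln (real n ^ t')"
    using assms False by (simp add: ln_realpow)
  then have "real t ^ (4 * t) \<le> real n ^ t'"
    using assms(1) False by simp
  then have "t ^ (4 * t) \<le> n ^ t'"
    by (metis of_nat_le_iff of_nat_power)
  moreover have "t ^ t < t ^ (4 * t)"
    using False by (intro power_strict_increasing) auto
  ultimately show ?thesis
    by simp
qed

lemma fact_mult_neighbourhood_le_fact:
  fixes n t t' :: nat
  assumes "t ^ t < n ^ t'"
  shows "fact n * ((n + t' + 1) * t ^ t + 1) \<le> fact (n + t' + 1)"
proof -
  have "(n + t' + 1) * t ^ t + 1 \<le> (n + t' + 1) * (t ^ t + 1)"
    by (simp add: distrib_left)
  also have "\<dots> \<le> n ^ t' * (n + t' + 1)"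
    using assms by (subst mult.commute) (intro mult_le_mono2, simp)
  finally have "fact n * ((n + t' + 1) * t ^ t + 1) \<le> fact n * n ^ t' * (n + t' + 1)"
    unfolding mult.assoc by (rule mult_le_mono2)
  also have "\<dots> \<le> fact (n + t') * (n + t' + 1)"
    using fact_mult_power_le_fact_add by (rule mult_le_mono1)
  also have "\<dots> = fact (n + t' + 1)"
    by (simp add: fact_Suc)
  finally show ?thesis .
qed

lemma exists_large_code:
  fixes n t t' m :: nat
  assumes "t ^ t < n ^ t'"
  shows "\<exists>C\<subseteq>perms (n + t' + 1).
           (\<forall>p\<in>C. \<forall>q\<in>C. p \<noteq> q \<longrightarrow> \<not> confusable t m p q) \<and> fact n \<le> card C"
proof -
  define N where "N = n + t' + 1"
  have "\<exists>C\<subseteq>perms N. (\<forall>p\<in>C. \<forall>q\<in>C. p \<noteq> q \<longrightarrow> \<not> confusable t m p q)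
      \<and> card (perms N) \<le> card C * (N * t ^ t + 1)"
    by (rule exists_independent_set_card_ge) (simp_all add: finite_perms confusable_sym card_confusable_le)
  then obtain C where C: "C \<subseteq> perms N" "\<forall>p\<in>C. \<forall>q\<in>C. p \<noteq> q \<longrightarrow> \<not> confusable t m p q"
    and size: "card (perms N) \<le> card C * (N * t ^ t + 1)"
    by blast
  have "fact n * (N * t ^ t + 1) \<le> fact N"
    unfolding N_def using assms by (rule fact_mult_neighbourhood_le_fact)
  also have "\<dots> \<le> card C * (N * t ^ t + 1)"
    using size by (simp add: card_perms)
  finally have "fact n \<le> card C"
    by (rule mult_right_le_imp_le) simp
  then show ?thesis
    using C unfolding N_def by blast
qed

lemma exists_decoder:
  assumes "\<And>x y r. x \<in> A \<Longrightarrow> y \<in> A \<Longrightarrow> channel (E x) r \<Longrightarrow> channel (E y) r \<Longrightarrow> x = y"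
  shows "\<exists>D. \<forall>x\<in>A. \<forall>r. channel (E x) r \<longrightarrow> D r = x"
proof -
  define D where "D r = (SOME x. x \<in> A \<and> channel (E x) r)" for r
  have "D r = x" if x: "x \<in> A" "channel (E x) r" for x r
  proof -
    have "D r \<in> A \<and> channel (E (D r)) r"
      unfolding D_def using x by (rule someI[where P = "\<lambda>x. x \<in> A \<and> channel (E x) r", OF conjI])
    then show ?thesis
      using x assms by blast
  qed
  then show ?thesis
    by blast
qed

theorem theorem2:
  fixes n t t' m :: nat
  assumes "n > 0" "t > 0" "t' > 0"
    and "n \<ge> 2 * t * (t + 1)"
    and "real t' * ln (real n) \<ge> 4 * real t * ln (real t)"
  shows "\<exists>(Eb :: nat list \<Rightarrow> nat list) (D :: nat list \<Rightarrow> nat list).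
           (\<forall>\<sigma>\<in>perms n. Eb \<sigma> \<in> perms (n + t' + 1)) \<and>
           (\<forall>\<sigma>\<in>perms n. \<forall>pe. stuck_burst t m (Eb \<sigma>) pe \<longrightarrow> D pe = \<sigma>)"
proof -
  have "2 \<le> 2 * t * (t + 1)"
    using assms(2) by (cases t) auto
  then have "2 \<le> n"
    using assms(4) by linarith
  then have "t ^ t < n ^ t'"
    using assms by (intro power_self_less_power) auto
  then obtain C where C: "C \<subseteq> perms (n + t' + 1)"
    and code: "\<forall>p\<in>C. \<forall>q\<in>C. p \<noteq> q \<longrightarrow> \<not> confusable t m p q"
    and "card (perms n) \<le> card C"
    using exists_large_code[OF \<open>t ^ t < n ^ t'\<close>, of m] by (auto simp: card_perms)
  then obtain Eb where Eb: "inj_on Eb (perms n)" "Eb ` perms n \<subseteq> C"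
    using card_le_inj finite_perms finite_subset[OF C] by metis
  have "\<exists>D. \<forall>\<sigma>\<in>perms n. \<forall>pe. stuck_burst t m (Eb \<sigma>) pe \<longrightarrow> D pe = \<sigma>"
  proof (rule exists_decoder)
    fix \<sigma> \<tau> pe
    assume "\<sigma> \<in> perms n" "\<tau> \<in> perms n" "stuck_burst t m (Eb \<sigma>) pe" "stuck_burst t m (Eb \<tau>) pe"
    then show "\<sigma> = \<tau>"
      using Eb code unfolding confusable_def by (metis image_subset_iff inj_on_eq_iff)
  qed
  then show ?thesis
    using Eb(2) C by blast
qed

end
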